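(* Let $a,b$ be nonnegative integers and let $G$ be a finite group. If for every minimal normal subgroup $M$ of $G$ the quotient $G/M$ is sub-$(a,b)$-valent, then for every nontrivial normal subgroup $N$ of $G$ the quotient $G/N$ is sub-$(a,b)$-valent.
   Context: An involution is an element of order $2$. A subset $S$ of a group $G$ is a Cayley set of $G$ if $1\notin S$, $S$ is inverse-closed, and $S$ generates $G$. On pairs of nonnegative integers define $(a',b')\preccurlyeq(a,b)$ if and only if $b'\le b$ and $a'\le a+(b-b')/2$. A Cayley set is sub-$(a,b)$-valent if it consists of $a'$ involutions and $b'$ non-involutions with $(a',b')\preccurlyeq(a,b)$. A group is sub-$(a,b)$-valent if it has a sub-$(a,b)$-valent Cayley set. *)

theory Defs
  imports "HOL-Algebra.Algebra"
begin

definition involution :: "('a, 'b) monoid_scheme \<Rightarrow> 'a \<Rightarrow> bool" where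
  "involution G x \<longleftrightarrow> x \<in> carrier G \<and> group.ord G x = 2"

definition cayley_set :: "('a, 'b) monoid_scheme \<Rightarrow> 'a set \<Rightarrow> bool" where
  "cayley_set G S \<longleftrightarrow> S \<subseteq> carrier G \<and> \<one>\<^bsub>G\<^esub> \<notin> S
     \<and> (\<forall>x\<in>S. inv\<^bsub>G\<^esub> x \<in> S) \<and> generate G S = carrier G"

definition valency_le :: "nat \<times> nat \<Rightarrow> nat \<times> nat \<Rightarrow> bool" where
  "valency_le p q \<longleftrightarrow> snd p \<le> snd q \<and>
     real (fst p) \<le> real (fst q) + (real (snd q) - real (snd p)) / 2"

definition sub_valent_set :: "('a, 'b) monoid_scheme \<Rightarrow> nat \<Rightarrow> nat \<Rightarrow> 'a set \<Rightarrow> bool" where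
  "sub_valent_set G a b S \<longleftrightarrow> cayley_set G S \<and> finite S \<and>
     valency_le (card {x\<in>S. involution G x}, card {x\<in>S. \<not> involution G x}) (a, b)"

definition sub_valent_group :: "('a, 'b) monoid_scheme \<Rightarrow> nat \<Rightarrow> nat \<Rightarrow> bool" where
  "sub_valent_group G a b \<longleftrightarrow> (\<exists>S. sub_valent_set G a b S)"

definition minimal_normal :: "'a set \<Rightarrow> ('a, 'b) monoid_scheme \<Rightarrow> bool" where
  "minimal_normal M G \<longleftrightarrow> M \<lhd> G \<and> M \<noteq> {\<one>\<^bsub>G\<^esub>} \<and>
     (\<forall>K. K \<lhd> G \<and> K \<subseteq> M \<and> K \<noteq> {\<one>\<^bsub>G\<^esub>} \<longrightarrow> K = M)"

end

theory Submission
  imports Defs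
begin

text \<open>If \<open>M \<subseteq> N\<close> are normal, then \<open>G/N\<close> is a quotient of \<open>G/M\<close>, and sub-\<open>(a,b)\<close>-valency
passes to quotients: the image \<open>T\<close> of a Cayley set \<open>S\<close>, with the identity removed, is again a
Cayley set. Involutions map to involutions or to \<open>1\<close>; a non-involution may become an
involution, but then it and its inverse (a different element of \<open>S\<close>) have the same image,
so each such involution of \<open>T\<close> costs two non-involutions of \<open>S\<close>, which is exactly what
the order \<open>\<preccurlyeq>\<close> allows. Since \<open>G\<close> is finite, every nontrivial normal \<open>N\<close> contains a minimal
normal subgroup \<open>M\<close>.\<close>

lemma valency_le_iff:
  "valency_le (a', b') (a, b) \<longleftrightarrow> b' \<le> b \<and> 2 * a' + b' \<le> 2 * a + b"
proof -
  have "real a' \<le> real a + (real b - real b') / 2 \<longleftrightarrow> real (2 * a' + b') \<le> real (2 * a + b)"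
    by (simp add: field_simps)
  then show ?thesis unfolding valency_le_def of_nat_le_iff by simp
qed

lemma valency_le_trans: "valency_le p q \<Longrightarrow> valency_le q r \<Longrightarrow> valency_le p r"
  by (cases p; cases q; cases r) (simp add: valency_le_iff)

lemma card_image_le_half:
  assumes "finite A"
    and "\<And>x. x \<in> A \<Longrightarrow> \<sigma> x \<in> A" "\<And>x. x \<in> A \<Longrightarrow> \<sigma> x \<noteq> x" "\<And>x. x \<in> A \<Longrightarrow> f (\<sigma> x) = f x"
  shows "2 * card (f ` A) \<le> card A"
proof -
  have "2 * card (f ` A) = (\<Sum>y\<in>f ` A. 2)" by simp
  also have "\<dots> \<le> (\<Sum>y\<in>f ` A. card {x\<in>A. f x = y})"
  proof (rule sum_mono)
    fix y assume "y \<in> f ` A"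
    then obtain x where x: "x \<in> A" "y = f x" by auto
    then have "{x, \<sigma> x} \<subseteq> {x\<in>A. f x = y}" using assms by auto
    then have "card {x, \<sigma> x} \<le> card {x\<in>A. f x = y}" using \<open>finite A\<close> by (intro card_mono) auto
    moreover have "card {x, \<sigma> x} = 2" using assms(3)[OF x(1)] by simp
    ultimately show "2 \<le> card {x\<in>A. f x = y}" by simp
  qed
  also have "\<dots> = card A"
    using sum.image_gen[OF \<open>finite A\<close>, of "\<lambda>_. 1 :: nat" f] by simp
  finally show ?thesis .
qed

context group
begin

lemma involution_iff: "involution G x \<longleftrightarrow> x \<in> carrier G \<and> x \<noteq> \<one> \<and> x \<otimes> x = \<one>"
proof -
  have "ord x = 2 \<longleftrightarrow> x \<noteq> \<one> \<and> x \<otimes> x = \<one>" if x: "x \<in> carrier G"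
  proof -
    have "x \<otimes> x = \<one> \<longleftrightarrow> ord x dvd 2"
      using pow_eq_id[OF x, of 2] x by (simp add: numeral_2_eq_2)
    moreover have "ord x dvd 2 \<longleftrightarrow> ord x = 1 \<or> ord x = 2"
      using dvd_imp_le[of "ord x" 2] by (auto simp: le_Suc_eq numeral_2_eq_2)
    ultimately show ?thesis using ord_eq_1[OF x] by auto
  qed
  then show ?thesis unfolding involution_def by auto
qed

lemma involution_inv_iff: "x \<in> carrier G \<Longrightarrow> involution G (inv x) \<longleftrightarrow> involution G x"
  by (simp add: involution_def)

lemma inv_neq_self: "x \<in> carrier G \<Longrightarrow> x \<noteq> \<one> \<Longrightarrow> \<not> involution G x \<Longrightarrow> inv x \<noteq> x"
  using involution_iff by (metis r_inv)

lemma generate_Diff_one: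
  assumes "A \<subseteq> carrier G"
  shows "generate G (A - {\<one>}) = generate G A"
proof
  show "generate G (A - {\<one>}) \<subseteq> generate G A"
    by (rule mono_generate) auto
  have "A \<subseteq> generate G (A - {\<one>})"
    by (auto intro: generate.one generate.incl)
  then show "generate G A \<subseteq> generate G (A - {\<one>})"
    by (intro generate_subgroup_incl generate_is_subgroup) (use assms in auto)
qed

end

context group_hom
begin

lemma involution_image: "involution G x \<Longrightarrow> h x = \<one>\<^bsub>H\<^esub> \<or> involution H (h x)"
  using G.involution_iff H.involution_iff by (metis hom_closed hom_mult hom_one)

lemma image_inv_eq_if_involution:
  "x \<in> carrier G \<Longrightarrow> involution H (h x) \<Longrightarrow> h (inv\<^bsub>G\<^esub> x) = h x"
  using H.involution_iff by (metis H.inv_equality hom_inv)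

lemma cayley_set_image:
  assumes "cayley_set G S" and surj: "h ` carrier G = carrier H"
  shows "cayley_set H (h ` S - {\<one>\<^bsub>H\<^esub>})"
proof -
  have S: "S \<subseteq> carrier G" "\<forall>x\<in>S. inv\<^bsub>G\<^esub> x \<in> S" "generate G S = carrier G"
    using assms(1) unfolding cayley_set_def by auto
  have "generate H (h ` S - {\<one>\<^bsub>H\<^esub>}) = generate H (h ` S)"
    using S(1) by (intro H.generate_Diff_one) auto
  also have "\<dots> = carrier H"
    using generate_img[OF S(1)] S(3) surj by simp
  finally have "generate H (h ` S - {\<one>\<^bsub>H\<^esub>}) = carrier H" .
  moreover have "inv\<^bsub>H\<^esub> y \<in> h ` S - {\<one>\<^bsub>H\<^esub>}" if y: "y \<in> h ` S - {\<one>\<^bsub>H\<^esub>}" for y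
  proof -
    obtain x where x: "x \<in> S" "y = h x" "y \<noteq> \<one>\<^bsub>H\<^esub>" using y by auto
    then have "inv\<^bsub>H\<^esub> y = h (inv\<^bsub>G\<^esub> x)" "inv\<^bsub>H\<^esub> y \<noteq> \<one>\<^bsub>H\<^esub>" using S(1) by auto
    then show ?thesis using S(2) x(1) by auto
  qed
  ultimately show ?thesis using S(1) unfolding cayley_set_def by auto
qed

lemma valency_image_le:
  assumes "cayley_set G S" "finite S"
  defines "T \<equiv> h ` S - {\<one>\<^bsub>H\<^esub>}"
  shows "valency_le (card {y\<in>T. involution H y}, card {y\<in>T. \<not> involution H y})
                    (card {x\<in>S. involution G x}, card {x\<in>S. \<not> involution G x})"
proof -
  have S: "S \<subseteq> carrier G" "\<one> \<notin> S" "\<And>x. x \<in> S \<Longrightarrow> inv x \<in> S"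
    using assms(1) unfolding cayley_set_def by auto
  define Sflip where "Sflip = {x\<in>S. \<not> involution G x \<and> involution H (h x)}"
  define Skeep where "Skeep = {x\<in>S. \<not> involution G x \<and> h x \<noteq> \<one>\<^bsub>H\<^esub> \<and> \<not> involution H (h x)}"
  have "{y\<in>T. \<not> involution H y} \<subseteq> h ` Skeep"
    unfolding T_def Skeep_def using involution_image by fastforce
  then have "card {y\<in>T. \<not> involution H y} \<le> card (h ` Skeep)"
    using assms(2) by (intro card_mono) (auto simp: Skeep_def)
  also have "\<dots> \<le> card Skeep"
    using assms(2) by (intro card_image_le) (simp add: Skeep_def)
  finally have keep: "card {y\<in>T. \<not> involution H y} \<le> card Skeep" .
  have "{y\<in>T. involution H y} \<subseteq> h ` {x\<in>S. involution G x} \<union> h ` Sflip"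
    unfolding T_def Sflip_def by auto
  then have "card {y\<in>T. involution H y} \<le> card (h ` {x\<in>S. involution G x} \<union> h ` Sflip)"
    using assms(2) by (intro card_mono) (auto simp: Sflip_def)
  also have "\<dots> \<le> card (h ` {x\<in>S. involution G x}) + card (h ` Sflip)"
    by (rule card_Un_le)
  finally have "card {y\<in>T. involution H y} \<le> card (h ` {x\<in>S. involution G x}) + card (h ` Sflip)" .
  moreover have "card (h ` {x\<in>S. involution G x}) \<le> card {x\<in>S. involution G x}"
    using assms(2) by (intro card_image_le) auto
  moreover have "2 * card (h ` Sflip) \<le> card Sflip"
  proof (rule card_image_le_half[where \<sigma> = "m_inv G"])
    fix x assume "x \<in> Sflip"
    then have x: "x \<in> S" "x \<in> carrier G" "\<not> involution G x" "involution H (h x)"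
      using S(1) unfolding Sflip_def by auto
    show "inv x \<in> Sflip" using x S(3) image_inv_eq_if_involution G.involution_inv_iff
      unfolding Sflip_def by auto
    show "inv x \<noteq> x" using x S(2) G.inv_neq_self by metis
    show "h (inv x) = h x" using x image_inv_eq_if_involution by blast
  qed (use assms(2) in \<open>simp add: Sflip_def\<close>)
  moreover have "card Sflip + card Skeep \<le> card {x\<in>S. \<not> involution G x}"
  proof -
    have "card Sflip + card Skeep = card (Sflip \<union> Skeep)"
      using assms(2) unfolding Sflip_def Skeep_def by (intro card_Un_disjoint[symmetric]) auto
    also have "\<dots> \<le> card {x\<in>S. \<not> involution G x}"
      using assms(2) unfolding Sflip_def Skeep_def by (intro card_mono) auto
    finally show ?thesis .
  qed
  ultimately show ?thesis using keep by (simp add: valency_le_iff)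
qed

lemma sub_valent_group_image:
  assumes "h ` carrier G = carrier H" "sub_valent_group G a b"
  shows "sub_valent_group H a b"
proof -
  obtain S where S: "cayley_set G S" "finite S"
    "valency_le (card {x\<in>S. involution G x}, card {x\<in>S. \<not> involution G x}) (a, b)"
    using assms(2) unfolding sub_valent_group_def sub_valent_set_def by blast
  have "sub_valent_set H a b (h ` S - {\<one>\<^bsub>H\<^esub>})"
    unfolding sub_valent_set_def
    using cayley_set_image[OF S(1) assms(1)] S(2) valency_le_trans[OF valency_image_le[OF S(1,2)] S(3)]
    by simp
  then show ?thesis unfolding sub_valent_group_def by blast
qed

end

lemma FactGroup_surj_hom:
  assumes "M \<lhd> G" "N \<lhd> G" "M \<subseteq> N"
  obtains f where "group_hom (G Mod M) (G Mod N) f" "f ` carrier (G Mod M) = carrier (G Mod N)"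
proof -
  interpret N: normal N G by fact
  interpret quot: group_hom G "G Mod N" "\<lambda>x. N #>\<^bsub>G\<^esub> x"
    by (simp add: group_hom_axioms_def group_hom_def N.r_coset_hom_Mod N.factorgroup_is_group)
  have "M \<subseteq> kernel G (G Mod N) (\<lambda>x. N #>\<^bsub>G\<^esub> x)"
    using assms(3) N.rcos_const N.subset unfolding kernel_def by auto
  then obtain f where f: "f \<in> hom (G Mod M) (G Mod N)" "\<And>x. x \<in> carrier G \<Longrightarrow> f (M #>\<^bsub>G\<^esub> x) = N #>\<^bsub>G\<^esub> x"
    using quot.FactGroup_universal_kernel[OF assms(1)] by blast
  have "group_hom (G Mod M) (G Mod N) f"
    using f(1) normal.factorgroup_is_group[OF assms(1)] N.factorgroup_is_group
    by (simp add: group_hom_axioms_def group_hom_def)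
  moreover have "f ` carrier (G Mod M) = carrier (G Mod N)"
    unfolding carrier_FactGroup image_image using f(2) by simp
  ultimately show thesis by (rule that)
qed

lemma (in group) minimal_normal_below:
  assumes "finite (carrier G)" "N \<lhd> G" "N \<noteq> {\<one>}"
  obtains M where "minimal_normal M G" "M \<subseteq> N"
proof -
  let ?P = "\<lambda>K. K \<lhd> G \<and> K \<subseteq> N \<and> K \<noteq> {\<one>}"
  obtain M where M: "?P M" and least: "\<And>K. ?P K \<Longrightarrow> card M \<le> card K"
    using ex_has_least_nat[of ?P N card] assms(2,3) by blast
  have "finite M"
    using M assms(1) by (meson finite_subset normal_imp_subgroup subgroup.subset)
  have "K = M" if "K \<lhd> G" "K \<subseteq> M" "K \<noteq> {\<one>}" for K
    using that M least[of K] \<open>finite M\<close> by (metis card_seteq order_trans)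
  then have "minimal_normal M G" using M unfolding minimal_normal_def by auto
  with M show thesis using that by blast
qed

theorem lemma3p1:
  fixes G :: "('a, 'b) monoid_scheme" and a b :: nat
  assumes "group G" and "finite (carrier G)"
    and "\<And>M. minimal_normal M G \<Longrightarrow> sub_valent_group (G Mod M) a b"
  shows "\<forall>N. N \<lhd> G \<and> N \<noteq> {\<one>\<^bsub>G\<^esub>} \<longrightarrow> sub_valent_group (G Mod N) a b"
proof (intro allI impI)
  fix N assume "N \<lhd> G \<and> N \<noteq> {\<one>\<^bsub>G\<^esub>}"
  then have N: "N \<lhd> G" "N \<noteq> {\<one>\<^bsub>G\<^esub>}" by auto
  obtain M where M: "minimal_normal M G" "M \<subseteq> N"
    using group.minimal_normal_below[OF assms(1,2) N] by blast
  then have "M \<lhd> G" unfolding minimal_normal_def by simp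
  then obtain f where f: "group_hom (G Mod M) (G Mod N) f" "f ` carrier (G Mod M) = carrier (G Mod N)"
    using FactGroup_surj_hom N(1) M(2) by metis
  show "sub_valent_group (G Mod N) a b"
    using group_hom.sub_valent_group_image[OF f assms(3)[OF M(1)]] .
qed

end
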